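(* Let $a\in\mathbb{C}$ with $|a-\tfrac14|\le\tfrac14$, $a\neq0$, and $\varphi(z)=az^2+(1-2a)z+a$. Then: (i) if $|a-\tfrac14|<\tfrac14$, $\varphi$ is essentially linear fractional (with $\eta=\zeta=1$); (ii) if $|a-\tfrac14|=\tfrac14$ and $a\neq\tfrac12$, then $\varphi$ is not essentially linear fractional, but $\varphi\circ\varphi$ is essentially linear fractional; (iii) if $a=\tfrac12$, i.e. $\varphi(z)=\tfrac12z^2+\tfrac12$, then no iterate $\varphi_n$ ($n\ge1$) is essentially linear fractional.
   Context: An analytic self-map $\varphi$ of the open unit disk $\mathbb{D}$ is called essentially linear fractional if (1) $\varphi(\mathbb{D})$ is contained in a proper subdisk of $\mathbb{D}$ internally tangent to the unit circle at some point $\eta\in\partial\mathbb{D}$; (2) the set $\varphi^{-1}(\{\eta\}):=\{\gamma\in\partial\mathbb{D}:\eta \text{ belongs to the cluster set of } \varphi \text{ at } \gamma\}$ consists of exactly one point $\zeta\in\partial\mathbb{D}$; and (3) $\varphi'''$ extends continuously to $\mathbb{D}\cup\{\zeta\}$. (For $\varphi$ analytic on a neighborhood of $\overline{\mathbb{D}}$, the cluster-set condition in (2) just means $\varphi(\gamma)=\eta$.) $\varphi_n$ denotes the $n$-th iterate of $\varphi$. *)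

theory Defs
  imports "HOL-Analysis.Analysis"
begin

definition cluster_set :: "(complex \<Rightarrow> complex) \<Rightarrow> complex \<Rightarrow> complex set" where
  "cluster_set f \<gamma> = {w. \<forall>\<delta>>0. w \<in> closure (f ` (ball 0 1 \<inter> ball \<gamma> \<delta>))}"

definition bdry_preimage :: "(complex \<Rightarrow> complex) \<Rightarrow> complex \<Rightarrow> complex set" where
  "bdry_preimage f \<eta> = {\<gamma>. norm \<gamma> = 1 \<and> \<eta> \<in> cluster_set f \<gamma>}"

text \<open>Essentially linear fractional, with the tangency point eta and the unique boundary
  preimage zeta made explicit.  The subdisk internally tangent to the unit circle at eta
  with radius r (0<r<1) is the open disk centred at (1-r)eta of radius r.\<close>
definition ELF_at :: "(complex \<Rightarrow> complex) \<Rightarrow> complex \<Rightarrow> complex \<Rightarrow> bool" where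
  "ELF_at f \<eta> \<zeta> \<longleftrightarrow>
     f holomorphic_on ball 0 1 \<and> f ` ball 0 1 \<subseteq> ball 0 1 \<and>
     norm \<eta> = 1 \<and>
     (\<exists>r. 0 < r \<and> r < 1 \<and> f ` ball 0 1 \<subseteq> ball (complex_of_real (1 - r) * \<eta>) r) \<and>
     bdry_preimage f \<eta> = {\<zeta>} \<and>
     (\<exists>g. continuous_on (ball 0 1 \<union> {\<zeta>}) g \<and> (\<forall>z\<in>ball 0 1. g z = (deriv ^^ 3) f z))"

definition ess_lin_frac :: "(complex \<Rightarrow> complex) \<Rightarrow> bool" where
  "ess_lin_frac f \<longleftrightarrow> (\<exists>\<eta> \<zeta>. ELF_at f \<eta> \<zeta>)"

end

theory Submission
  imports Defs "HOL-Complex_Analysis.Complex_Analysis"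
begin

text \<open>
  The substitution \<open>W = 1/(z - 1)\<close> maps the unit disk onto the half-plane \<open>Re W < -1/2\<close>,
  a disk of radius \<open>r\<close> internally tangent at \<open>1\<close> onto the smaller half-plane
  \<open>Re W < -1/(2r)\<close>, and conjugates \<open>\<phi>\<close> to \<open>T W = W\<^sup>2 / (W + a)\<close>. Measuring the depth
  \<open>d W = -Re W - 1/2\<close> into the half-plane, an exact identity gives
  \<open>d (T W) \<ge> d W + ((1/16 - \<bar>a - 1/4\<bar>\<^sup>2)/2 + Re a (Im W)\<^sup>2) / \<bar>W + a\<bar>\<^sup>2\<close>.
  Inside the disk \<open>\<bar>a - 1/4\<bar> < 1/4\<close> the first term yields a uniform gain of depth, so \<open>\<phi>\<close> maps
  into a tangent subdisk; \<open>1\<close> is its only boundary point sent to \<open>1\<close>.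
  On the circle \<open>\<bar>a - 1/4\<bar> = 1/4\<close> the boundary point \<open>-1/2\<close> is mapped to the boundary
  point \<open>-1/2 - i Im a/(1 - 2 Re a)\<close>, so by continuity \<open>T\<close> gains no uniform depth; but
  when \<open>a \<noteq> 1/2\<close> this image has nonzero imaginary part, and the second term makes \<open>T \<circ> T\<close>
  gain depth uniformly. Finally, for \<open>a = 1/2\<close> both \<open>1\<close> and \<open>-1\<close> are sent to \<open>1\<close> by every
  iterate.
\<close>

lemma cluster_set_continuous:
  assumes f: "continuous_on UNIV f" and \<gamma>: "norm \<gamma> = 1"
  shows "cluster_set f \<gamma> = {f \<gamma>}"
proof
  show "{f \<gamma>} \<subseteq> cluster_set f \<gamma>"
  proof (clarsimp simp: cluster_set_def)
    fix d :: real assume "d > 0"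
    then have "\<gamma> \<in> closure (ball \<gamma> d \<inter> ball 0 1)"
      using \<gamma> open_Int_closure_subset[of "ball \<gamma> d" "ball 0 1"] by auto
    moreover have "f ` closure (ball 0 1 \<inter> ball \<gamma> d) \<subseteq> closure (f ` (ball 0 1 \<inter> ball \<gamma> d))"
      by (rule image_closure_subset) (auto intro: continuous_on_subset[OF f] closure_subset[THEN subsetD])
    ultimately show "f \<gamma> \<in> closure (f ` (ball 0 1 \<inter> ball \<gamma> d))"
      by (auto simp: Int_commute)
  qed
  show "cluster_set f \<gamma> \<subseteq> {f \<gamma>}"
  proof
    fix w assume w: "w \<in> cluster_set f \<gamma>"
    show "w \<in> {f \<gamma>}"
    proof (rule ccontr)
      assume "w \<notin> {f \<gamma>}"
      then have e: "dist w (f \<gamma>) / 2 > 0" by simp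
      from f have "isCont f \<gamma>" by (simp add: continuous_on_eq_continuous_at)
      then obtain d where d: "d > 0" "\<And>z. dist z \<gamma> < d \<Longrightarrow> dist (f z) (f \<gamma>) < dist w (f \<gamma>) / 2"
        using e unfolding continuous_at_eps_delta by blast
      have "f ` (ball 0 1 \<inter> ball \<gamma> d) \<subseteq> cball (f \<gamma>) (dist w (f \<gamma>) / 2)"
        using d by (auto simp: dist_commute less_imp_le)
      then have "closure (f ` (ball 0 1 \<inter> ball \<gamma> d)) \<subseteq> cball (f \<gamma>) (dist w (f \<gamma>) / 2)"
        by (simp add: closure_minimal)
      moreover have "w \<in> closure (f ` (ball 0 1 \<inter> ball \<gamma> d))"
        using w d unfolding cluster_set_def by auto
      ultimately show False using e by (auto simp: dist_commute)
    qed
  qed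
qed

lemma bdry_preimage_continuous:
  "continuous_on UNIV f \<Longrightarrow> bdry_preimage f \<eta> = {\<gamma>. norm \<gamma> = 1 \<and> f \<gamma> = \<eta>}"
  using cluster_set_continuous unfolding bdry_preimage_def by auto

lemma tangent_disk_subset_unit_disk:
  assumes "norm \<eta> = 1" "0 < r" "r \<le> 1"
  shows "ball (complex_of_real (1 - r) * \<eta>) r \<subseteq> ball 0 1"
proof
  fix w assume "w \<in> ball (complex_of_real (1 - r) * \<eta>) r"
  then have "norm (w - complex_of_real (1 - r) * \<eta>) < r"
    by (simp add: dist_norm norm_minus_commute)
  moreover have "norm w \<le> norm (w - complex_of_real (1 - r) * \<eta>) + norm (complex_of_real (1 - r) * \<eta>)"
    by (metis add.commute norm_triangle_sub)
  moreover have "norm (complex_of_real (1 - r) * \<eta>) = 1 - r"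
    using assms by (simp add: norm_mult del: of_real_diff)
  ultimately show "w \<in> ball 0 1" by simp
qed

lemma tangent_cdisk_inter_circle:
  assumes \<eta>: "norm \<eta> = 1" and r: "0 < r" "r < 1"
    and w: "w \<in> cball (complex_of_real (1 - r) * \<eta>) r" "norm w = 1"
  shows "w = \<eta>"
proof -
  have "w \<bullet> (complex_of_real (1 - r) * \<eta>) = (1 - r) * (w \<bullet> \<eta>)"
    by (metis inner_scaleR_right scaleR_conv_of_real)
  then have "(norm (w - complex_of_real (1 - r) * \<eta>))\<^sup>2 = 1 + (1 - r)\<^sup>2 - 2 * (1 - r) * (w \<bullet> \<eta>)"
    using dot_norm_neg[of w "complex_of_real (1 - r) * \<eta>"] w(2) \<eta> r by (simp add: norm_mult algebra_simps del: of_real_diff)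
  moreover have "(norm (w - complex_of_real (1 - r) * \<eta>))\<^sup>2 \<le> r\<^sup>2"
    using w(1) by (simp add: dist_norm norm_minus_commute power_mono)
  ultimately have "(1 - r) * (2 - 2 * (w \<bullet> \<eta>)) \<le> 0"
    by (simp add: power2_eq_square algebra_simps)
  then have "w \<bullet> \<eta> \<ge> 1" using r by (simp add: mult_le_0_iff)
  then have "(norm (w - \<eta>))\<^sup>2 \<le> 0"
    using dot_norm_neg[of w \<eta>] w(2) \<eta> by simp
  then show ?thesis by simp
qed

lemma ELF_at_1_1_if_entire:
  assumes f: "f holomorphic_on UNIV" and f1: "f 1 = 1"
    and boundary: "\<And>\<gamma>. norm \<gamma> = 1 \<Longrightarrow> f \<gamma> = 1 \<Longrightarrow> \<gamma> = 1"
    and r: "0 < r" "r < 1" and sub: "f ` ball 0 1 \<subseteq> ball (complex_of_real (1 - r)) r"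
  shows "ELF_at f 1 1"
proof -
  have "continuous_on UNIV f"
    using f by (rule holomorphic_on_imp_continuous_on)
  then have "bdry_preimage f 1 = {1}"
    using f1 boundary by (auto simp: bdry_preimage_continuous)
  moreover have "continuous_on (ball 0 1 \<union> {1}) ((deriv ^^ 3) f)"
    using holomorphic_higher_deriv[OF f open_UNIV, THEN holomorphic_on_imp_continuous_on]
    by (rule continuous_on_subset) simp
  moreover have "f ` ball 0 1 \<subseteq> ball 0 1"
    using sub tangent_disk_subset_unit_disk[of 1 r] r by auto
  ultimately show ?thesis
    unfolding ELF_at_def using f sub r by (auto intro: holomorphic_on_subset)
qed

lemma ess_lin_frac_fixing_boundary_point:
  assumes f: "continuous_on UNIV f" and p: "norm p = 1" "f p = 1" and "ess_lin_frac f"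
  obtains r \<zeta> where "0 < r" "r < 1" "f ` ball 0 1 \<subseteq> ball (complex_of_real (1 - r)) r"
    and "{\<gamma>. norm \<gamma> = 1 \<and> f \<gamma> = 1} = {\<zeta>}"
proof -
  obtain \<eta> \<zeta> r where \<eta>: "norm \<eta> = 1" and r: "0 < r" "r < 1"
    and sub: "f ` ball 0 1 \<subseteq> ball (complex_of_real (1 - r) * \<eta>) r"
    and pre: "bdry_preimage f \<eta> = {\<zeta>}"
    using \<open>ess_lin_frac f\<close> unfolding ess_lin_frac_def ELF_at_def by blast
  have "f ` closure (ball 0 1) \<subseteq> cball (complex_of_real (1 - r) * \<eta>) r"
    using sub by (intro image_closure_subset continuous_on_subset[OF f]) auto
  moreover have "p \<in> closure (ball 0 1)"
    using p by simp
  ultimately have "1 \<in> cball (complex_of_real (1 - r) * \<eta>) r"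
    using p by (metis image_subset_iff)
  then have "\<eta> = 1"
    using tangent_cdisk_inter_circle[OF \<eta> r] by (metis norm_one)
  then show ?thesis
    using that r sub pre by (simp add: bdry_preimage_continuous[OF f])
qed

lemma disk_excess_eq: "1/16 - (cmod (a - 1/4))\<^sup>2 = Re a * (1/2 - Re a) - (Im a)\<^sup>2"
  by (simp add: cmod_power2) (simp add: power2_eq_square algebra_simps)

lemma disk_excess_nonneg: "cmod (a - 1/4) \<le> 1/4 \<Longrightarrow> 0 \<le> 1/16 - (cmod (a - 1/4))\<^sup>2"
  using power_mono[of "cmod (a - 1/4)" "1/4" 2] by (simp add: power2_eq_square)

lemma Re_bounds_in_disk:
  assumes "cmod (a - 1/4) \<le> 1/4"
  shows "a \<noteq> 0 \<Longrightarrow> 0 < Re a" and "a \<noteq> 1/2 \<Longrightarrow> Re a < 1/2"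
proof -
  have Im: "(Im a)\<^sup>2 \<le> Re a * (1/2 - Re a)"
    using disk_excess_nonneg[OF assms] disk_excess_eq[of a] by simp
  have "\<bar>Re a - 1/4\<bar> \<le> 1/4"
    using assms abs_Re_le_cmod[of "a - 1/4"] by simp
  then have Re: "0 \<le> Re a" "Re a \<le> 1/2"
    by linarith+
  show "0 < Re a" if "a \<noteq> 0"
  proof (rule ccontr)
    assume "\<not> 0 < Re a"
    then have "Re a = 0"
      using Re by simp
    then have "Im a = 0"
      using Im by simp
    with \<open>Re a = 0\<close> that show False
      by (simp add: complex_eq_iff)
  qed
  show "Re a < 1/2" if "a \<noteq> 1/2"
  proof (rule ccontr)
    assume "\<not> Re a < 1/2"
    then have Re_half: "Re a = 1/2"
      using Re by simp
    then have "Im a = 0"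
      using Im by (simp add: Re_half)
    then have "a = 1/2"
      by (intro complex_eqI) (simp_all add: Re_half)
    with that show False ..
  qed
qed

lemma boundary_circle_Im_sq:
  assumes "cmod (a - 1/4) = 1/4"
  shows "(Im a)\<^sup>2 = Re a * (1/2 - Re a)"
  using disk_excess_eq[of a] unfolding assms by (simp add: power2_eq_square)

definition quad_map :: "complex \<Rightarrow> complex \<Rightarrow> complex" where
  "quad_map a z = a * z\<^sup>2 + (1 - 2 * a) * z + a"

definition hp_map :: "complex \<Rightarrow> complex \<Rightarrow> complex" where
  "hp_map a W = W\<^sup>2 / (W + a)"

definition hp_depth :: "complex \<Rightarrow> real" where
  "hp_depth W = - Re W - 1/2"

lemma in_tangent_disk_iff:
  assumes r: "0 < r"
  shows "w \<in> ball (complex_of_real (1 - r)) r \<longleftrightarrow> (1/r - 1) / 2 < hp_depth (1 / (w - 1))"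
proof (cases "w = 1")
  case True
  then show ?thesis
    using r by (simp add: hp_depth_def dist_norm field_simps)
next
  case False
  define u where "u = w - 1"
  have n: "(Re u)\<^sup>2 + (Im u)\<^sup>2 > 0"
    using False unfolding u_def by (simp add: complex_eq_iff sum_power2_gt_zero_iff)
  have "w \<in> ball (complex_of_real (1 - r)) r \<longleftrightarrow> sqrt ((Re u + r)\<^sup>2 + (Im u)\<^sup>2) < sqrt (r\<^sup>2)"
    using r by (simp add: u_def dist_norm cmod_def algebra_simps power2_commute[of 1 "r + Re w"])
  also have "\<dots> \<longleftrightarrow> (Re u + r)\<^sup>2 + (Im u)\<^sup>2 < r\<^sup>2"
    by (rule real_sqrt_less_iff)
  also have "\<dots> \<longleftrightarrow> (Re u)\<^sup>2 + (Im u)\<^sup>2 + 2 * r * Re u < 0"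
    by (simp add: power2_eq_square algebra_simps)
  also have "\<dots> \<longleftrightarrow> Re u / ((Re u)\<^sup>2 + (Im u)\<^sup>2) < - 1 / (2 * r)"
    using n r by (simp add: field_simps, arith)
  also have "\<dots> \<longleftrightarrow> (1/r - 1) / 2 < hp_depth (1 / (w - 1))"
    using r by (simp add: hp_depth_def u_def[symmetric] Re_divide power2_eq_square field_simps)
  finally show ?thesis .
qed

lemma in_unit_disk_iff: "w \<in> ball 0 1 \<longleftrightarrow> 0 < hp_depth (1 / (w - 1))"
  using in_tangent_disk_iff[of 1 w] by simp

lemma quad_map_reciprocal: "1 / (quad_map a z - 1) = hp_map a (1 / (z - 1))"
  \<comment> \<open>no side condition: at \<open>z = 1\<close>, and where \<open>W + a = 0\<close>, both sides are \<open>1/0 = 0\<close>\<close>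
proof (cases "z = 1")
  case False
  then have "quad_map a z - 1 = (z - 1)\<^sup>2 * (1 / (z - 1) + a)"
    by (simp add: quad_map_def field_simps power2_eq_square)
  then show ?thesis
    by (simp add: hp_map_def power2_eq_square)
qed (simp add: quad_map_def hp_map_def)

lemma funpow_quad_map_reciprocal:
  "1 / ((quad_map a ^^ n) z - 1) = (hp_map a ^^ n) (1 / (z - 1))"
  by (induction n) (simp_all add: quad_map_reciprocal)

lemma funpow_quad_map_image_iff:
  assumes "0 < r"
  shows "(quad_map a ^^ n) ` ball 0 1 \<subseteq> ball (complex_of_real (1 - r)) r
     \<longleftrightarrow> (\<forall>W. 0 < hp_depth W \<longrightarrow> (1/r - 1) / 2 < hp_depth ((hp_map a ^^ n) W))"
proof
  assume sub: "(quad_map a ^^ n) ` ball 0 1 \<subseteq> ball (complex_of_real (1 - r)) r"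
  show "\<forall>W. 0 < hp_depth W \<longrightarrow> (1/r - 1) / 2 < hp_depth ((hp_map a ^^ n) W)"
  proof (intro allI impI)
    fix W assume W: "0 < hp_depth W"
    have W_eq: "1 / ((1 + 1 / W) - 1) = W"
      by simp
    then have "1 + 1 / W \<in> ball 0 1"
      using W in_unit_disk_iff by metis
    then have "(quad_map a ^^ n) (1 + 1 / W) \<in> ball (complex_of_real (1 - r)) r"
      using sub by blast
    then show "(1/r - 1) / 2 < hp_depth ((hp_map a ^^ n) W)"
      using in_tangent_disk_iff[OF assms] by (simp only: funpow_quad_map_reciprocal W_eq)
  qed
next
  assume H: "\<forall>W. 0 < hp_depth W \<longrightarrow> (1/r - 1) / 2 < hp_depth ((hp_map a ^^ n) W)"
  show "(quad_map a ^^ n) ` ball 0 1 \<subseteq> ball (complex_of_real (1 - r)) r"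
  proof (rule image_subsetI)
    fix z :: complex assume "z \<in> ball 0 1"
    then have "(1/r - 1) / 2 < hp_depth ((hp_map a ^^ n) (1 / (z - 1)))"
      using H in_unit_disk_iff by blast
    then show "(quad_map a ^^ n) z \<in> ball (complex_of_real (1 - r)) r"
      using in_tangent_disk_iff[OF assms] funpow_quad_map_reciprocal by metis
  qed
qed

lemma hp_depth_hp_map:
  "hp_depth (hp_map a W) * (cmod (W + a))\<^sup>2 = hp_depth W * (cmod (W + a))\<^sup>2
     + (hp_depth W + 1/2) * (Re a * hp_depth W + 1/16 - (cmod (a - 1/4))\<^sup>2) + Re a * (Im W)\<^sup>2"
proof (cases "W + a = 0")
  case True
  then have "W = - a" by (simp add: add_eq_0_iff)
  then show ?thesis
    by (simp add: hp_depth_def cmod_power2) (simp add: power2_eq_square algebra_simps)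
next
  case False
  define D where "D = (Re W + Re a)\<^sup>2 + (Im W + Im a)\<^sup>2"
  have "D \<noteq> 0"
    using False unfolding D_def
    by (metis complex_eq_iff plus_complex.sel sum_power2_eq_zero_iff zero_complex.sel)
  moreover have "Re (hp_map a W) = (((Re W)\<^sup>2 - (Im W)\<^sup>2) * (Re W + Re a) + 2 * Re W * Im W * (Im W + Im a)) / D"
    unfolding hp_map_def Re_divide D_def by (simp add: power2_eq_square)
  ultimately have "Re (hp_map a W) * D = ((Re W)\<^sup>2 - (Im W)\<^sup>2) * (Re W + Re a) + 2 * Re W * Im W * (Im W + Im a)"
    by simp
  moreover have "(cmod (W + a))\<^sup>2 = D" "(cmod (a - 1/4))\<^sup>2 = (Re a - 1/4)\<^sup>2 + (Im a)\<^sup>2"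
    unfolding D_def cmod_power2 by simp_all
  ultimately show ?thesis
    unfolding hp_depth_def D_def by (simp add: power2_eq_square algebra_simps)
qed

lemma add_ne_0_if_hp_depth_pos:
  assumes "cmod (a - 1/4) \<le> 1/4" "0 < hp_depth W"
  shows "W + a \<noteq> 0"
proof -
  have "Re a - 1/4 \<le> 1/4"
    using assms(1) complex_Re_le_cmod[of "a - 1/4"] by simp
  then have "Re (W + a) < 0"
    using assms(2) by (simp add: hp_depth_def)
  then show ?thesis
    by (metis less_irrefl zero_complex.sel(1))
qed

lemma hp_depth_hp_map_ge:
  assumes a: "0 < Re a" "cmod (a - 1/4) \<le> 1/4" and W: "0 < hp_depth W"
  shows "hp_depth W + ((1/16 - (cmod (a - 1/4))\<^sup>2) / 2 + Re a * (Im W)\<^sup>2) / (cmod (W + a))\<^sup>2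
           \<le> hp_depth (hp_map a W)"
proof -
  define t where "t = hp_depth W"
  define e where "e = 1/16 - (cmod (a - 1/4))\<^sup>2"
  have D: "(cmod (W + a))\<^sup>2 > 0"
    using add_ne_0_if_hp_depth_pos[OF a(2) W] by simp
  have "e \<ge> 0"
    using disk_excess_nonneg[OF a(2)] unfolding e_def .
  then have "e / 2 \<le> (t + 1/2) * (Re a * t + e)"
    using a(1) W unfolding t_def by (simp add: algebra_simps)
  then have "t * (cmod (W + a))\<^sup>2 + (e / 2 + Re a * (Im W)\<^sup>2)
      \<le> hp_depth (hp_map a W) * (cmod (W + a))\<^sup>2"
    unfolding hp_depth_hp_map t_def e_def by (simp add: algebra_simps)
  then show ?thesis
    using D unfolding t_def e_def by (simp add: field_simps)
qed

lemma hp_depth_hp_map_ge_Im: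
  assumes "0 < Re a" "cmod (a - 1/4) \<le> 1/4" "0 < hp_depth W"
  shows "hp_depth W + Re a * (Im W)\<^sup>2 / (cmod (W + a))\<^sup>2 \<le> hp_depth (hp_map a W)"
proof -
  have "0 \<le> (1/16 - (cmod (a - 1/4))\<^sup>2) / 2 / (cmod (W + a))\<^sup>2"
    using disk_excess_nonneg[OF assms(2)] by (intro divide_nonneg_nonneg) simp_all
  then show ?thesis
    using hp_depth_hp_map_ge[OF assms] add_divide_distrib[of "(1/16 - (cmod (a - 1/4))\<^sup>2) / 2" "Re a * (Im W)\<^sup>2" "(cmod (W + a))\<^sup>2"]
    by linarith
qed

lemma hp_depth_le_hp_depth_hp_map:
  assumes "0 < Re a" "cmod (a - 1/4) \<le> 1/4" "0 < hp_depth W"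
  shows "hp_depth W \<le> hp_depth (hp_map a W)"
proof -
  have "0 \<le> Re a * (Im W)\<^sup>2 / (cmod (W + a))\<^sup>2"
    using assms(1) by simp
  then show ?thesis
    using hp_depth_hp_map_ge_Im[OF assms] by linarith
qed

lemma holomorphic_funpow_quad_map: "(quad_map a ^^ n) holomorphic_on UNIV"
proof (induction n)
  case (Suc n)
  have "quad_map a holomorphic_on UNIV"
    unfolding quad_map_def[abs_def] by (intro holomorphic_intros)
  then have "(quad_map a \<circ> (quad_map a ^^ n)) holomorphic_on UNIV"
    by (rule holomorphic_on_compose_gen[OF Suc.IH]) simp
  then show ?case
    by (simp add: comp_def)
qed (simp add: holomorphic_on_id)

lemma quad_map_maps_closed_disk:
  assumes a: "0 < Re a" "cmod (a - 1/4) \<le> 1/4" and z: "norm z \<le> 1"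
  shows "norm (quad_map a z) \<le> 1"
proof -
  have "quad_map a ` ball 0 1 \<subseteq> ball 0 1"
  proof (rule image_subsetI)
    fix z :: complex assume "z \<in> ball 0 1"
    then have "0 < hp_depth (1 / (z - 1))"
      using in_unit_disk_iff by blast
    then have "0 < hp_depth (hp_map a (1 / (z - 1)))"
      using hp_depth_le_hp_depth_hp_map[OF a] by (meson less_le_trans)
    then show "quad_map a z \<in> ball 0 1"
      using in_unit_disk_iff quad_map_reciprocal by metis
  qed
  moreover have "continuous_on UNIV (quad_map a)"
    using holomorphic_funpow_quad_map[where n = 1] by (simp add: holomorphic_on_imp_continuous_on)
  ultimately have "quad_map a ` closure (ball 0 1) \<subseteq> closure (ball 0 1)"
    by (intro image_closure_subset) (auto intro: continuous_on_subset closure_subset[THEN subsetD])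
  then show ?thesis
    using z by (simp add: image_subset_iff)
qed

lemma quad_map_eq_1_imp:
  assumes "Re a < 1/2" "norm w \<le> 1" "quad_map a w = 1"
  shows "w = 1"
proof (rule ccontr)
  assume "w \<noteq> 1"
  moreover have "(w - 1) * (1 + a * (w - 1)) = 0"
    using assms(3) by (simp add: quad_map_def algebra_simps power2_eq_square)
  ultimately have "1 + a * (w - 1) = 0"
    by simp
  then have "a * w = a - 1"
    by (simp add: algebra_simps)
  then have "norm (a - 1) \<le> norm a"
    using assms(2) by (metis mult_left_le norm_ge_zero norm_mult)
  then have "(Re a - 1)\<^sup>2 + (Im a)\<^sup>2 \<le> (Re a)\<^sup>2 + (Im a)\<^sup>2"
    by (simp add: cmod_def)
  then show False
    using assms(1) by (simp add: power2_eq_square algebra_simps)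
qed

lemma funpow_quad_map_eq_1_imp:
  assumes a: "0 < Re a" "Re a < 1/2" "cmod (a - 1/4) \<le> 1/4"
  shows "norm w \<le> 1 \<Longrightarrow> (quad_map a ^^ n) w = 1 \<Longrightarrow> w = 1"
proof (induction n arbitrary: w)
  case (Suc n)
  then have "quad_map a w = 1"
    using quad_map_maps_closed_disk[OF a(1,3)] by (simp only: funpow_Suc_right comp_apply)
  then show ?case
    using quad_map_eq_1_imp[OF a(2) Suc.prems(1)] by simp
qed simp

lemma ELF_at_funpow_quad_map:
  assumes a: "0 < Re a" "Re a < 1/2" "cmod (a - 1/4) \<le> 1/4"
    and k: "0 < k" "\<And>W. 0 < hp_depth W \<Longrightarrow> k \<le> hp_depth ((hp_map a ^^ n) W)"
  shows "ELF_at (quad_map a ^^ n) 1 1"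
proof (rule ELF_at_1_1_if_entire)
  show "(quad_map a ^^ n) holomorphic_on UNIV"
    by (rule holomorphic_funpow_quad_map)
  show "(quad_map a ^^ n) 1 = 1"
    by (induction n) (simp_all add: quad_map_def)
  show "\<And>\<gamma>. norm \<gamma> = 1 \<Longrightarrow> (quad_map a ^^ n) \<gamma> = 1 \<Longrightarrow> \<gamma> = 1"
    using funpow_quad_map_eq_1_imp[OF a] by simp
  show "0 < 1 / (1 + k)" "1 / (1 + k) < 1"
    using k(1) by simp_all
  have "(1 / (1 / (1 + k)) - 1) / 2 < hp_depth ((hp_map a ^^ n) W)" if "0 < hp_depth W" for W
    using k(1) k(2)[OF that] by simp
  then show "(quad_map a ^^ n) ` ball 0 1 \<subseteq> ball (complex_of_real (1 - 1 / (1 + k))) (1 / (1 + k))"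
    using funpow_quad_map_image_iff \<open>0 < 1 / (1 + k)\<close> by blast
qed

lemma norm_add_square_le:
  assumes "0 \<le> Re a" "0 < hp_depth W" "hp_depth W \<le> 1"
  shows "(cmod (W + a))\<^sup>2 \<le> 2 * (Im W)\<^sup>2 + ((3/2 + Re a)\<^sup>2 + 2 * (Im a)\<^sup>2)"
proof -
  have "\<bar>Re (W + a)\<bar> \<le> 3/2 + Re a"
    using assms by (simp add: hp_depth_def)
  then have "(Re (W + a))\<^sup>2 \<le> (3/2 + Re a)\<^sup>2"
    by (metis abs_le_square_iff abs_of_nonneg assms(1) add_nonneg_nonneg zero_le_divide_iff
        zero_le_numeral)
  moreover have "(Im W + Im a)\<^sup>2 \<le> 2 * (Im W)\<^sup>2 + 2 * (Im a)\<^sup>2"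
    using zero_le_power2[of "Im W - Im a"] by (simp add: power2_eq_square algebra_simps)
  ultimately show ?thesis
    by (simp add: cmod_power2)
qed

lemma hp_map_uniform_depth:
  assumes a: "0 < Re a" "cmod (a - 1/4) < 1/4"
  shows "\<exists>k>0. \<forall>W. 0 < hp_depth W \<longrightarrow> k \<le> hp_depth (hp_map a W)"
proof -
  define e where "e = 1/16 - (cmod (a - 1/4))\<^sup>2"
  define L where "L = (3/2 + Re a)\<^sup>2 + 2 * (Im a)\<^sup>2"
  define k where "k = min (Re a / 2) (min 1 (e / (2 * L)))"
  have e: "0 < e"
    using power_strict_mono[OF a(2) norm_ge_zero, of 2] unfolding e_def by (simp add: power2_eq_square)
  have L: "0 < L"
    unfolding L_def using a(1) by (simp add: add_pos_nonneg)
  have k: "0 < k" "k \<le> Re a / 2" "k \<le> 1"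
    using a(1) e L by (simp_all add: k_def)
  have "k \<le> e / (2 * L)"
    by (simp add: k_def)
  then have kL: "k * L \<le> e / 2"
    using L by (simp add: field_simps)
  have "k \<le> hp_depth (hp_map a W)" if W: "0 < hp_depth W" for W
  proof (cases "k \<le> hp_depth W")
    case True
    then show ?thesis
      using hp_depth_le_hp_depth_hp_map[OF a(1) _ W] a(2) by linarith
  next
    case False
    have D: "0 < (cmod (W + a))\<^sup>2" "(cmod (W + a))\<^sup>2 \<le> 2 * (Im W)\<^sup>2 + L"
      using add_ne_0_if_hp_depth_pos[OF _ W] a(2) norm_add_square_le[OF _ W] a(1) False k(3)
      by (auto simp: L_def)
    have "k * (cmod (W + a))\<^sup>2 \<le> 2 * k * (Im W)\<^sup>2 + k * L"
      using mult_left_mono[OF D(2), of k] k(1) by (simp add: algebra_simps)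
    also have "\<dots> \<le> e / 2 + Re a * (Im W)\<^sup>2"
      using k(2) kL mult_right_mono[of "2 * k" "Re a" "(Im W)\<^sup>2"] by simp
    finally have "k \<le> (e / 2 + Re a * (Im W)\<^sup>2) / (cmod (W + a))\<^sup>2"
      using D(1) by (simp add: field_simps)
    then show ?thesis
      using hp_depth_hp_map_ge[OF a(1) _ W] a(2) W unfolding e_def by linarith
  qed
  then show ?thesis
    using k(1) by blast
qed

lemma norm_add_half_square_bound:
  assumes a: "0 < Re a" "cmod (a - 1/4) \<le> 1/4" and W: "0 < hp_depth W"
    and \<delta>: "hp_depth (hp_map a W) < \<delta>" "\<delta> \<le> 1" "\<delta> \<le> Re a / 4"
  shows "Re a * (cmod (W + 1/2))\<^sup>2 < \<delta> * (Re a + 2 * ((3/2 + Re a)\<^sup>2 + 2 * (Im a)\<^sup>2))"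
proof -
  define L where "L = (3/2 + Re a)\<^sup>2 + 2 * (Im a)\<^sup>2"
  define t where "t = hp_depth W"
  define D where "D = (cmod (W + a))\<^sup>2"
  have t: "0 < t" "t < \<delta>"
    using W \<delta>(1) hp_depth_le_hp_depth_hp_map[OF a W] unfolding t_def by simp_all
  have D: "0 < D" "D \<le> 2 * (Im W)\<^sup>2 + L"
    using add_ne_0_if_hp_depth_pos[OF a(2) W] norm_add_square_le[OF _ W] a(1) t \<delta>(2)
    unfolding D_def L_def t_def by auto
  have "Re a * (Im W)\<^sup>2 / D \<le> hp_depth (hp_map a W) - t"
    using hp_depth_hp_map_ge_Im[OF a W] unfolding t_def D_def by simp
  then have "Re a * (Im W)\<^sup>2 / D < \<delta>"
    using \<delta>(1) t(1) by linarith
  then have "Re a * (Im W)\<^sup>2 < \<delta> * D"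
    using pos_divide_less_eq[OF D(1)] by simp
  also have "\<dots> \<le> Re a / 2 * (Im W)\<^sup>2 + \<delta> * L"
    using mult_left_mono[OF D(2), of \<delta>] t \<delta>(3) mult_right_mono[of "2 * \<delta>" "Re a / 2" "(Im W)\<^sup>2"]
    by (simp add: algebra_simps)
  finally have Im_small: "Re a * (Im W)\<^sup>2 < 2 * \<delta> * L"
    by linarith
  have "t * t \<le> t * 1"
    using t \<delta>(2) by (intro mult_left_mono) auto
  then have "Re a * t\<^sup>2 \<le> Re a * \<delta>"
    using t a(1) unfolding power2_eq_square by (intro mult_left_mono) linarith+
  moreover have "(cmod (W + 1/2))\<^sup>2 = t\<^sup>2 + (Im W)\<^sup>2"
    unfolding t_def hp_depth_def cmod_power2 by (simp add: power2_eq_square algebra_simps)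
  ultimately show ?thesis
    using Im_small unfolding L_def by (simp add: algebra_simps)
qed

lemma hp_depth_hp_map_small_imp_near:
  assumes a: "0 < Re a" "cmod (a - 1/4) \<le> 1/4" and \<epsilon>: "0 < \<epsilon>"
  shows "\<exists>\<delta>>0. \<forall>W. 0 < hp_depth W \<and> hp_depth (hp_map a W) < \<delta> \<longrightarrow> cmod (W + 1/2) < \<epsilon>"
proof -
  define L where "L = (3/2 + Re a)\<^sup>2 + 2 * (Im a)\<^sup>2"
  define \<delta> where "\<delta> = min 1 (min (Re a / 4) (Re a * \<epsilon>\<^sup>2 / (Re a + 2 * L)))"
  have L: "0 \<le> L"
    by (simp add: L_def)
  have "\<delta> \<le> Re a / 4"
    unfolding \<delta>_def by (meson min.cobounded1 min.cobounded2 order_trans)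
  moreover have "0 < \<delta>" "\<delta> \<le> 1"
    using a(1) \<epsilon> L by (simp_all add: \<delta>_def add_pos_nonneg)
  ultimately have \<delta>: "0 < \<delta>" "\<delta> \<le> 1" "\<delta> \<le> Re a / 4"
    by simp_all
  have "\<delta> \<le> Re a * \<epsilon>\<^sup>2 / (Re a + 2 * L)"
    by (simp add: \<delta>_def)
  then have \<delta>\<epsilon>: "\<delta> * (Re a + 2 * L) \<le> Re a * \<epsilon>\<^sup>2"
    using a(1) L by (simp add: pos_le_divide_eq add_pos_nonneg)
  have "cmod (W + 1/2) < \<epsilon>" if W: "0 < hp_depth W" and small: "hp_depth (hp_map a W) < \<delta>" for W
  proof -
    have "Re a * (cmod (W + 1/2))\<^sup>2 < Re a * \<epsilon>\<^sup>2"
      using norm_add_half_square_bound[OF a W small \<delta>(2,3)] \<delta>\<epsilon> unfolding L_def by linarith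
    then have "(cmod (W + 1/2))\<^sup>2 < \<epsilon>\<^sup>2"
      using a(1) by simp
    then show ?thesis
      using \<epsilon> by (simp add: power_less_imp_less_base)
  qed
  then show ?thesis
    using \<delta>(1) by blast
qed

lemma hp_map_minus_half:
  assumes a: "cmod (a - 1/4) = 1/4" "a \<noteq> 1/2"
  shows "hp_map a (-1/2) = Complex (-1/2) (- Im a / (1 - 2 * Re a))"
proof -
  have "Re a \<noteq> 1/2"
    using Re_bounds_in_disk(2) a by force
  moreover have "(Re a - 1/2)\<^sup>2 + (Im a)\<^sup>2 = (1 - 2 * Re a) / 4"
    using boundary_circle_Im_sq[OF a(1)] by (simp add: power2_eq_square algebra_simps)
  ultimately show ?thesis
    by (simp add: hp_map_def complex_eq_iff Re_divide Im_divide power2_eq_square field_simps)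
qed

lemma hp_depth_hp_map_not_bounded_below:
  assumes a: "cmod (a - 1/4) = 1/4" "a \<noteq> 1/2" and c: "0 < c"
  shows "\<exists>W. 0 < hp_depth W \<and> hp_depth (hp_map a W) < c"
proof -
  have "-1/2 + a \<noteq> 0"
    using a(2) by (metis add.commute add_eq_0_iff minus_divide_left)
  then have "isCont (\<lambda>W. hp_depth (hp_map a W)) (-1/2)"
    unfolding hp_depth_def hp_map_def by (intro continuous_intros) auto
  moreover have "hp_depth (hp_map a (-1/2)) = 0"
    unfolding hp_depth_def hp_map_minus_half[OF a] by simp
  ultimately obtain d where d: "0 < d" "\<And>W. dist W (-1/2) < d \<Longrightarrow> \<bar>hp_depth (hp_map a W)\<bar> < c"
    using c unfolding continuous_at_eps_delta by (metis dist_real_def diff_zero)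
  define W where "W = -1/2 - complex_of_real (d/2)"
  have "dist W (-1/2) < d" "0 < hp_depth W"
    using d(1) by (simp_all add: W_def dist_norm hp_depth_def)
  then show ?thesis
    using d(2) by (meson abs_less_iff)
qed

lemma hp_map_Im_near_minus_half:
  assumes a: "cmod (a - 1/4) = 1/4" "Im a \<noteq> 0"
  shows "\<exists>\<rho>>0. \<exists>c>0. \<exists>C>0. \<forall>W. cmod (W + 1/2) < \<rho> \<longrightarrow>
           c \<le> \<bar>Im (hp_map a W)\<bar> \<and> cmod (hp_map a W + a) \<le> C"
proof -
  have a_half: "a \<noteq> 1/2"
  proof
    assume "a = 1/2"
    with a(2) show False
      by simp
  qed
  define P where "P = hp_map a (-1/2)"
  define g where "g = Im P"
  have "1 - 2 * Re a \<noteq> 0"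
    using Re_bounds_in_disk(2)[OF _ a_half] a(1) by simp
  moreover have "g = - Im a / (1 - 2 * Re a)"
    unfolding g_def P_def hp_map_minus_half[OF a(1) a_half] by simp
  ultimately have g: "0 < \<bar>g\<bar> / 2"
    using a(2) by simp
  have "-1/2 + a \<noteq> 0"
    using a_half by (metis add.commute add_eq_0_iff minus_divide_left)
  then have "isCont (hp_map a) (-1/2)"
    unfolding hp_map_def[abs_def] by (intro continuous_intros) auto
  then obtain \<rho> where \<rho>: "0 < \<rho>" "\<And>W. dist W (-1/2) < \<rho> \<Longrightarrow> dist (hp_map a W) P < min (\<bar>g\<bar> / 2) 1"
    using g unfolding continuous_at_eps_delta P_def by (metis min_less_iff_conj zero_less_one)
  have "\<bar>g\<bar> / 2 \<le> \<bar>Im (hp_map a W)\<bar> \<and> cmod (hp_map a W + a) \<le> cmod (P + a) + 1"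
    if "cmod (W + 1/2) < \<rho>" for W
  proof -
    have "dist (hp_map a W) P < min (\<bar>g\<bar> / 2) 1"
      using \<rho>(2) that by (simp add: dist_norm)
    then have near: "\<bar>Im (hp_map a W) - g\<bar> < \<bar>g\<bar> / 2" "cmod (hp_map a W - P) < 1"
      using abs_Im_le_cmod[of "hp_map a W - P"] unfolding g_def dist_norm by auto
    have "\<bar>g\<bar> / 2 \<le> \<bar>Im (hp_map a W)\<bar>"
      using near(1) by arith
    moreover have "cmod (hp_map a W + a) \<le> cmod (P + a) + 1"
      using norm_triangle_ineq[of "P + a" "hp_map a W - P"] near(2) by (simp add: add.commute)
    ultimately show ?thesis ..
  qed
  moreover have "0 < cmod (P + a) + 1"
    by (simp add: add_nonneg_pos)
  ultimately show ?thesis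
    using \<rho>(1) g by blast
qed

lemma hp_depth_hp_map_ge_of_Im:
  assumes a: "0 < Re a" "cmod (a - 1/4) \<le> 1/4" and W: "0 < hp_depth W"
    and c: "0 \<le> c" "c \<le> \<bar>Im W\<bar>" and C: "cmod (W + a) \<le> C"
  shows "Re a * c\<^sup>2 / C\<^sup>2 \<le> hp_depth (hp_map a W)"
proof -
  have "c\<^sup>2 \<le> (Im W)\<^sup>2"
    using c by (metis abs_le_square_iff abs_of_nonneg)
  moreover have "0 < (cmod (W + a))\<^sup>2"
    using add_ne_0_if_hp_depth_pos[OF a(2) W] by simp
  moreover have "(cmod (W + a))\<^sup>2 \<le> C\<^sup>2"
    using C by (simp add: power_mono)
  ultimately have "Re a * c\<^sup>2 / C\<^sup>2 \<le> Re a * (Im W)\<^sup>2 / (cmod (W + a))\<^sup>2"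
    using a(1) by (intro frac_le mult_left_mono) auto
  also have "\<dots> \<le> hp_depth (hp_map a W)"
    using hp_depth_hp_map_ge_Im[OF a W] W by simp
  finally show ?thesis .
qed

lemma hp_map_iterate_uniform_depth:
  assumes a: "0 < Re a" "cmod (a - 1/4) = 1/4" "Im a \<noteq> 0"
  shows "\<exists>k>0. \<forall>W. 0 < hp_depth W \<longrightarrow> k \<le> hp_depth (hp_map a (hp_map a W))"
proof -
  have a_le: "cmod (a - 1/4) \<le> 1/4"
    using a(2) by simp
  obtain \<rho> c C where \<rho>: "0 < \<rho>" and c: "0 < c" and C: "0 < C"
    and near: "\<And>W. cmod (W + 1/2) < \<rho> \<Longrightarrow> c \<le> \<bar>Im (hp_map a W)\<bar> \<and> cmod (hp_map a W + a) \<le> C"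
    using hp_map_Im_near_minus_half[OF a(2,3)] by blast
  obtain \<delta> where \<delta>: "0 < \<delta>" "\<And>W. 0 < hp_depth W \<Longrightarrow> hp_depth (hp_map a W) < \<delta> \<Longrightarrow> cmod (W + 1/2) < \<rho>"
    using hp_depth_hp_map_small_imp_near[OF a(1) a_le \<rho>] by auto
  define k where "k = min \<delta> (Re a * c\<^sup>2 / C\<^sup>2)"
  have "k \<le> hp_depth (hp_map a (hp_map a W))" if W: "0 < hp_depth W" for W
  proof -
    have W': "0 < hp_depth (hp_map a W)"
      using hp_depth_le_hp_depth_hp_map[OF a(1) a_le W] W by simp
    show ?thesis
    proof (cases "\<delta> \<le> hp_depth (hp_map a W)")
      case True
      then show ?thesis
        using hp_depth_le_hp_depth_hp_map[OF a(1) a_le W'] unfolding k_def by simp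
    next
      case False
      then have "c \<le> \<bar>Im (hp_map a W)\<bar>" "cmod (hp_map a W + a) \<le> C"
        using near \<delta>(2)[OF W] by simp_all
      then have "Re a * c\<^sup>2 / C\<^sup>2 \<le> hp_depth (hp_map a (hp_map a W))"
        using hp_depth_hp_map_ge_of_Im[OF a(1) a_le W'] c by simp
      then show ?thesis
        unfolding k_def by (meson min.cobounded2 order_trans)
    qed
  qed
  moreover have "0 < k"
    using \<delta>(1) a(1) c C by (simp add: k_def)
  ultimately show ?thesis
    by blast
qed

lemma ELF_at_quad_map:
  assumes a: "0 < Re a" "cmod (a - 1/4) < 1/4"
  shows "ELF_at (quad_map a) 1 1"
proof -
  have "a \<noteq> 1/2"
  proof
    assume "a = 1/2"
    with a(2) show False
      by simp
  qed
  then have "Re a < 1/2"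
    using Re_bounds_in_disk(2) a(2) by simp
  moreover obtain k where k: "0 < k" "\<And>W. 0 < hp_depth W \<Longrightarrow> k \<le> hp_depth ((hp_map a ^^ 1) W)"
    using hp_map_uniform_depth[OF a] by auto
  ultimately have "ELF_at (quad_map a ^^ 1) 1 1"
    using ELF_at_funpow_quad_map[OF a(1) _ _ k] a(2) by simp
  then show ?thesis
    by simp
qed

lemma not_ess_lin_frac_quad_map:
  assumes a: "cmod (a - 1/4) = 1/4" "a \<noteq> 1/2"
  shows "\<not> ess_lin_frac (quad_map a)"
proof
  assume ess: "ess_lin_frac (quad_map a)"
  have cont: "continuous_on UNIV (quad_map a)"
    using holomorphic_funpow_quad_map[where n = 1] by (simp add: holomorphic_on_imp_continuous_on)
  have fix1: "quad_map a 1 = 1"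
    by (simp add: quad_map_def)
  obtain r \<zeta> where r: "0 < r" "r < 1"
    and "quad_map a ` ball 0 1 \<subseteq> ball (complex_of_real (1 - r)) r"
    and "{\<gamma>. norm \<gamma> = 1 \<and> quad_map a \<gamma> = 1} = {\<zeta>}"
    by (rule ess_lin_frac_fixing_boundary_point[OF cont norm_one fix1 ess])
  then have above: "\<forall>W. 0 < hp_depth W \<longrightarrow> (1/r - 1) / 2 < hp_depth (hp_map a W)"
    using funpow_quad_map_image_iff[OF r(1), where n = 1] by simp
  have "0 < (1/r - 1) / 2"
    using r by simp
  then obtain W where "0 < hp_depth W" "hp_depth (hp_map a W) < (1/r - 1) / 2"
    using hp_depth_hp_map_not_bounded_below[OF a] by blast
  with above show False
    by fastforce
qed

lemma ess_lin_frac_quad_map_comp_quad_map: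
  assumes a: "0 < Re a" "cmod (a - 1/4) = 1/4" "a \<noteq> 1/2"
  shows "ess_lin_frac (quad_map a \<circ> quad_map a)"
proof -
  have "Re a < 1/2"
    using Re_bounds_in_disk(2) a by simp
  then have "Im a \<noteq> 0"
    using a(1) boundary_circle_Im_sq[OF a(2)] by auto
  then obtain k where k: "0 < k" "\<And>W. 0 < hp_depth W \<Longrightarrow> k \<le> hp_depth ((hp_map a ^^ 2) W)"
    using hp_map_iterate_uniform_depth[OF a(1,2)] by (auto simp: numeral_2_eq_2)
  have "ELF_at (quad_map a ^^ 2) 1 1"
    using ELF_at_funpow_quad_map[OF a(1) \<open>Re a < 1/2\<close> _ k] a(2) by simp
  then show ?thesis
    unfolding ess_lin_frac_def by (auto simp: numeral_2_eq_2)
qed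

lemma not_ess_lin_frac_funpow_quad_map_half:
  assumes "1 \<le> n"
  shows "\<not> ess_lin_frac (quad_map (1/2) ^^ n)"
proof
  assume "ess_lin_frac (quad_map (1/2) ^^ n)"
  moreover have "continuous_on UNIV (quad_map (1/2) ^^ n)"
    by (simp add: holomorphic_funpow_quad_map holomorphic_on_imp_continuous_on)
  moreover have fix1: "(quad_map (1/2) ^^ m) 1 = 1" for m
    by (induction m) (simp_all add: quad_map_def)
  ultimately obtain \<zeta> where \<zeta>: "{\<gamma>. norm \<gamma> = 1 \<and> (quad_map (1/2) ^^ n) \<gamma> = 1} = {\<zeta>}"
    using ess_lin_frac_fixing_boundary_point[of _ 1] by (metis norm_one)
  obtain m where "n = Suc m"
    using assms by (cases n) auto
  moreover have "quad_map (1/2) (-1) = 1"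
    by (simp add: quad_map_def)
  ultimately have "(quad_map (1/2) ^^ n) (-1) = 1"
    using fix1 by (simp add: funpow_Suc_right del: funpow.simps)
  then have "-1 \<in> {\<gamma>. norm \<gamma> = 1 \<and> (quad_map (1/2) ^^ n) \<gamma> = 1}"
    by simp
  moreover have "1 \<in> {\<gamma>. norm \<gamma> = 1 \<and> (quad_map (1/2) ^^ n) \<gamma> = 1}"
    using fix1 by simp
  ultimately show False
    unfolding \<zeta> by simp
qed

theorem mainTheorem5:
  fixes a :: complex and \<phi> :: "complex \<Rightarrow> complex"
  assumes "norm (a - 1/4) \<le> 1/4" and "a \<noteq> 0"
    and "\<phi> = (\<lambda>z. a * z^2 + (1 - 2*a) * z + a)"
  shows "(norm (a - 1/4) < 1/4 \<longrightarrow> ELF_at \<phi> 1 1)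
       \<and> (norm (a - 1/4) = 1/4 \<and> a \<noteq> 1/2 \<longrightarrow>
            \<not> ess_lin_frac \<phi> \<and> ess_lin_frac (\<phi> \<circ> \<phi>))
       \<and> (a = 1/2 \<longrightarrow> (\<forall>n\<ge>1. \<not> ess_lin_frac (\<phi> ^^ n)))"
proof -
  have \<phi>: "\<phi> = quad_map a"
    using assms(3) by (simp add: fun_eq_iff quad_map_def)
  have Re: "0 < Re a"
    using Re_bounds_in_disk(1) assms(1,2) by simp
  have "ELF_at \<phi> 1 1" if "norm (a - 1/4) < 1/4"
    unfolding \<phi> using ELF_at_quad_map[OF Re that] .
  moreover have "\<not> ess_lin_frac \<phi> \<and> ess_lin_frac (\<phi> \<circ> \<phi>)" if "norm (a - 1/4) = 1/4" "a \<noteq> 1/2"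
    unfolding \<phi> using not_ess_lin_frac_quad_map[OF that] ess_lin_frac_quad_map_comp_quad_map[OF Re that]
    by simp
  moreover have "\<not> ess_lin_frac (\<phi> ^^ n)" if "a = 1/2" "1 \<le> n" for n
    unfolding \<phi> \<open>a = 1/2\<close> using not_ess_lin_frac_funpow_quad_map_half[OF that(2)] .
  ultimately show ?thesis
    by blast
qed

end
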